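(* Let $\alpha>0$, $\varepsilon>0$, and let $\delta_1$ satisfy $0<\delta_1<\big(2+\frac{1}{\alpha+\varepsilon}\big)^{-1}$. Put $s=\frac{\alpha+\varepsilon}{2(\alpha+\varepsilon)+1}+\delta_1$. Then there exists $N=N(\alpha,\varepsilon,\delta_1)\in\mathbb N$ such that for every $n\ge N$ and every $\mathbf b\in\mathbb N_{\ge2}^n$, \[ \sum_{c\in\mathbb N,\ c\ge R_n(\mathbf b)}|K_{n+1}(\mathbf b c)|^s\le|K_n(\mathbf b)|^s . \]
   Context: Lüroth digits: for $x\in(0,1]$, $a_1(x)=[1/x]+1$, $\mathcal L(x)=[1/x]([1/x]+1)x-[1/x]$, $a_{n+1}(x)=a_1(\mathcal L^n(x))$. Cylinders: for $\mathbf b=(b_1,\dots,b_n)\in\mathbb N_{\ge2}^n$, $\mathcal C_n(\mathbf b)=\{x\in(0,1]: a_j(x)=b_j,\ 1\le j\le n\}$; $\mathbf b c=(b_1,\dots,b_n,c)$. For $\mathbf b\in\mathbb N_{\ge2}^n$, $Q_n(\mathbf b)=b_n\prod_{j=1}^{n-1}b_j(b_j-1)$, $R_n(\mathbf b)=Q_n(\mathbf b)^{1/(\alpha+\varepsilon)}$, and $K_n(\mathbf b)=\mathrm{Cl}\big(\bigcup\{\mathcal C_{n+1}(\mathbf b b_{n+1}): b_{n+1}\in\mathbb N,\ b_{n+1}\ge R_n(\mathbf b)\}\big)$ (a compact interval); $|\cdot|$ denotes diameter. *)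

theory Defs
  imports "HOL-Analysis.Analysis"
begin

definition luroth_map :: "real \<Rightarrow> real" where
  "luroth_map x = (let k = real_of_int \<lfloor>1 / x\<rfloor> in k * (k + 1) * x - k)"

text \<open>Digits, 0-indexed: luroth_digit j x is the paper's a_(j+1)(x) = a_1(L^j(x)),
  where a_1(y) = [1/y] + 1.\<close>
definition luroth_digit :: "nat \<Rightarrow> real \<Rightarrow> nat" where
  "luroth_digit j x = nat \<lfloor>1 / ((luroth_map ^^ j) x)\<rfloor> + 1"

definition cylinder :: "nat list \<Rightarrow> real set" where
  "cylinder b = {x \<in> {0<..1}. \<forall>j < length b. luroth_digit j x = b ! j}"

definition Qn :: "nat list \<Rightarrow> real" where
  "Qn b = real (last b) * (\<Prod>j<length b - 1. real (b ! j) * (real (b ! j) - 1))"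

text \<open>R_n(b) = Q_n(b)^(1/t), with t = alpha + epsilon.\<close>
definition Rn :: "real \<Rightarrow> nat list \<Rightarrow> real" where
  "Rn t b = Qn b powr (1 / t)"

definition Kn :: "real \<Rightarrow> nat list \<Rightarrow> real set" where
  "Kn t b = closure (\<Union>c \<in> {c::nat. real c \<ge> Rn t b}. cylinder (b @ [c]))"

end

theory Submission
  imports Defs
begin

text \<open>The cylinder of a word b with digits at least 2 is a half-open interval of length 1/P(b),
  where P(b) is the product of the b_j (b_j - 1), and the cylinders of the words b c with c \<ge> c0
  fill its left end of relative length 1/(c0 - 1). Hence |K_n(b)| = 1/(P(b) (\<lceil>R_n(b)\<rceil> - 1)), and
  since R_(n+1)(b c) = (c P(b))^(1/t) with t = \<alpha> + \<epsilon>, the children satisfy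
  |K_(n+1)(b c)|^s \<le> 4^s P(b)^(-s(1 + 1/t)) c^(-\<sigma>) with \<sigma> = s (2 + 1/t) > 1.
  The tail sum of c^(-\<sigma>) over c \<ge> c0 is at most (c0 - 1)^(1 - \<sigma>) / (\<sigma> - 1), and with
  c0 - 1 \<le> R_n(b) \<le> P(b)^(1/t) the whole sum is at most (P(b) (c0 - 1))^(-s) = |K_n(b)|^s
  as soon as P(b) is large; but P(b) \<ge> 2^n.\<close>

lemma luroth_digit_Suc: "luroth_digit (Suc j) x = luroth_digit j (luroth_map x)"
  unfolding luroth_digit_def funpow_Suc_right o_def by simp

lemma floor_inverse_eq_iff:
  assumes "d \<ge> 2" and "x > 0"
  shows "\<lfloor>1 / x\<rfloor> = int d - 1 \<longleftrightarrow> x \<in> {1 / real d<..1 / (real d - 1)}"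
proof -
  have "\<lfloor>1 / x\<rfloor> = int d - 1 \<longleftrightarrow> real d - 1 \<le> 1 / x \<and> 1 / x < real d"
    using assms by (simp add: floor_eq_iff)
  also have "\<dots> \<longleftrightarrow> x \<in> {1 / real d<..1 / (real d - 1)}"
    using assms by (auto simp: field_simps)
  finally show ?thesis .
qed

lemma luroth_digit_0_eq_iff:
  assumes "d \<ge> 2" and "x > 0"
  shows "luroth_digit 0 x = d \<longleftrightarrow> x \<in> {1 / real d<..1 / (real d - 1)}"
proof -
  have "luroth_digit 0 x = d \<longleftrightarrow> \<lfloor>1 / x\<rfloor> = int d - 1"
    using assms by (auto simp: luroth_digit_def)
  then show ?thesis using floor_inverse_eq_iff[OF assms] by simp
qed

lemma affine_image_greaterThanAtMost:
  fixes p l u :: real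
  assumes "l > 0"
  shows "(\<lambda>y. p + y / l) ` {0<..u} = {p<..p + u / l}"
proof -
  have "(\<lambda>y. p + y / l) ` {0<..u} = (+) p ` ((\<lambda>y. y / l) ` {0<..u})"
    by (simp add: image_image)
  also have "(\<lambda>y. y / l) ` {0<..u} = {0<..u / l}"
  proof (intro set_eqI iffI)
    fix x assume "x \<in> {0<..u / l}"
    then have "x * l \<in> {0<..u} \<and> x = x * l / l" using assms by (auto simp: field_simps)
    then show "x \<in> (\<lambda>y. y / l) ` {0<..u}" by blast
  qed (use assms in \<open>auto simp: divide_right_mono\<close>)
  finally show ?thesis by simp
qed

definition luroth_branch :: "nat \<Rightarrow> real \<Rightarrow> real" where
  "luroth_branch d y = 1 / real d + y / (real d * (real d - 1))"

lemma luroth_branch_image: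
  assumes "d \<ge> 2"
  shows "luroth_branch d ` {0<..1} = {1 / real d<..1 / (real d - 1)}"
proof -
  have "1 / real d + 1 / (real d * (real d - 1)) = 1 / (real d - 1)"
    using assms by (simp add: field_simps)
  then show ?thesis
    using affine_image_greaterThanAtMost[of "real d * (real d - 1)" "1 / real d" 1] assms
    by (simp add: luroth_branch_def[abs_def])
qed

lemma luroth_map_luroth_branch:
  assumes "d \<ge> 2" and "0 < y" and "y \<le> 1"
  shows "luroth_map (luroth_branch d y) = y"
proof -
  have "luroth_branch d y \<in> luroth_branch d ` {0<..1}"
    using assms by simp
  then have "luroth_branch d y \<in> {1 / real d<..1 / (real d - 1)}"
    unfolding luroth_branch_image[OF assms(1)] .
  moreover have "luroth_branch d y > 0"
    using assms by (simp add: luroth_branch_def add_pos_nonneg)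
  ultimately have "\<lfloor>1 / luroth_branch d y\<rfloor> = int d - 1"
    using floor_inverse_eq_iff[OF assms(1)] by simp
  then have "luroth_map (luroth_branch d y)
      = (real d - 1) * real d * luroth_branch d y - (real d - 1)"
    using assms(1) by (simp add: luroth_map_def Let_def of_nat_diff)
  also have "\<dots> = y"
    using assms(1) by (simp add: luroth_branch_def field_simps)
  finally show ?thesis .
qed

lemma cylinder_Cons:
  assumes "d \<ge> 2"
  shows "cylinder (d # w) = luroth_branch d ` cylinder w"
proof (intro set_eqI iffI)
  fix x assume x: "x \<in> cylinder (d # w)"
  then have "x > 0" and "luroth_digit 0 x = d" by (auto simp: cylinder_def)
  then have "x \<in> luroth_branch d ` {0<..1}"
    using luroth_digit_0_eq_iff[OF assms] luroth_branch_image[OF assms] by simp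
  then obtain y where y: "0 < y" "y \<le> 1" and xy: "x = luroth_branch d y" by auto
  have "luroth_map x = y" using xy y assms luroth_map_luroth_branch by simp
  then have "y \<in> cylinder w"
    using x y by (force simp: cylinder_def luroth_digit_Suc)
  then show "x \<in> luroth_branch d ` cylinder w" using xy by blast
next
  fix x assume "x \<in> luroth_branch d ` cylinder w"
  then obtain y where xy: "x = luroth_branch d y" and y: "y \<in> cylinder w" by blast
  then have y01: "0 < y" "y \<le> 1" by (auto simp: cylinder_def)
  have "x \<in> luroth_branch d ` {0<..1}" using xy y01 by simp
  then have x_int: "x \<in> {1 / real d<..1 / (real d - 1)}"
    unfolding luroth_branch_image[OF assms] .
  have x01: "0 < x" "x \<le> 1"
  proof -
    have "1 / (real d - 1) \<le> 1" using assms by simp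
    moreover have "0 < 1 / real d" using assms by simp
    ultimately show "0 < x" "x \<le> 1" using x_int by (meson greaterThanAtMost_iff less_trans order_trans)+
  qed
  have "luroth_digit 0 x = d" using luroth_digit_0_eq_iff[OF assms x01(1)] x_int by simp
  moreover have "luroth_map x = y" using xy y01 assms luroth_map_luroth_branch by simp
  ultimately show "x \<in> cylinder (d # w)"
    using x01 y by (auto simp: cylinder_def luroth_digit_Suc less_Suc_eq_0_disj)
qed

fun cylinder_left :: "nat list \<Rightarrow> real" where
  "cylinder_left [] = 0"
| "cylinder_left (d # b) = luroth_branch d (cylinder_left b)"

definition luroth_weight :: "nat list \<Rightarrow> real" where
  "luroth_weight b = (\<Prod>d\<leftarrow>b. real d * (real d - 1))"

lemma luroth_weight_Nil [simp]: "luroth_weight [] = 1"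
  by (simp add: luroth_weight_def)

lemma luroth_weight_Cons [simp]:
  "luroth_weight (d # b) = real d * (real d - 1) * luroth_weight b"
  by (simp add: luroth_weight_def)

lemma luroth_weight_append_singleton:
  "luroth_weight (b @ [c]) = luroth_weight b * (real c * (real c - 1))"
  by (simp add: luroth_weight_def)

lemma luroth_weight_ge_power:
  assumes "\<forall>d\<in>set b. d \<ge> 2"
  shows "luroth_weight b \<ge> 2 ^ length b"
  using assms
proof (induction b)
  case (Cons d b)
  have "2 * 1 \<le> real d * (real d - 1)"
    using Cons.prems by (intro mult_mono) auto
  then show ?case
    using Cons by (simp add: mult_mono)
qed simp

lemma cylinder_append:
  assumes "\<forall>d\<in>set b. d \<ge> 2"
  shows "cylinder (b @ w) = (\<lambda>y. cylinder_left b + y / luroth_weight b) ` cylinder w"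
  using assms
proof (induction b)
  case (Cons d b)
  then have "cylinder ((d # b) @ w)
      = luroth_branch d ` (\<lambda>y. cylinder_left b + y / luroth_weight b) ` cylinder w"
    by (simp add: cylinder_Cons)
  also have "\<dots> = (\<lambda>y. cylinder_left (d # b) + y / luroth_weight (d # b)) ` cylinder w"
    unfolding image_image
    by (intro image_cong) (simp_all add: luroth_branch_def add_divide_distrib)
  finally show ?case .
qed simp

lemma cylinder_singleton:
  assumes "c \<ge> 2"
  shows "cylinder [c] = {1 / real c<..1 / (real c - 1)}"
proof -
  have "cylinder [] = {0<..1}" by (auto simp: cylinder_def)
  then show ?thesis
    using cylinder_Cons[OF assms, of "[]"] luroth_branch_image[OF assms] by simp
qed

lemma UN_digit_intervals_atLeast:
  assumes "c\<^sub>0 \<ge> 2"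
  shows "(\<Union>c\<in>{c\<^sub>0..}. {1 / real c<..1 / (real c - 1)}) = {0<..1 / (real c\<^sub>0 - 1)}"
proof (intro set_eqI iffI)
  fix x assume "x \<in> (\<Union>c\<in>{c\<^sub>0..}. {1 / real c<..1 / (real c - 1)})"
  then obtain c where c: "c \<ge> c\<^sub>0" "1 / real c < x" "x \<le> 1 / (real c - 1)" by auto
  have "0 < 1 / real c" using c assms by simp
  then have "0 < x" using c(2) by linarith
  moreover have "1 / (real c - 1) \<le> 1 / (real c\<^sub>0 - 1)"
    using c assms by (intro divide_left_mono) auto
  ultimately show "x \<in> {0<..1 / (real c\<^sub>0 - 1)}" using c by auto
next
  fix x assume x: "x \<in> {0<..1 / (real c\<^sub>0 - 1)}"
  define c where "c = luroth_digit 0 x"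
  have "real c\<^sub>0 - 1 \<le> 1 / x" using x assms by (auto simp: field_simps)
  then have "int c\<^sub>0 - 1 \<le> \<lfloor>1 / x\<rfloor>" by (simp add: le_floor_iff)
  moreover have "c = nat \<lfloor>1 / x\<rfloor> + 1" by (simp add: c_def luroth_digit_def)
  ultimately have "c \<ge> c\<^sub>0" by auto
  then have "x \<in> {1 / real c<..1 / (real c - 1)}"
    using luroth_digit_0_eq_iff[of c x] x assms by (simp add: c_def)
  with \<open>c \<ge> c\<^sub>0\<close> show "x \<in> (\<Union>c\<in>{c\<^sub>0..}. {1 / real c<..1 / (real c - 1)})" by auto
qed

lemma Collect_real_ge_eq_atLeast: "{c::nat. real c \<ge> r} = {nat \<lceil>r\<rceil>..}"
  by (auto simp: nat_le_iff ceiling_le_iff)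

lemma diameter_Kn:
  assumes b: "\<forall>d\<in>set b. d \<ge> 2" and R: "Rn t b > 1"
  shows "diameter (Kn t b) = 1 / (luroth_weight b * (\<lceil>Rn t b\<rceil> - 1))"
proof -
  define c\<^sub>0 where "c\<^sub>0 = nat \<lceil>Rn t b\<rceil>"
  have c\<^sub>0: "c\<^sub>0 \<ge> 2" "real c\<^sub>0 = \<lceil>Rn t b\<rceil>"
    using R by (auto simp: c\<^sub>0_def le_nat_iff le_ceiling_iff)
  have W: "luroth_weight b > 0"
    using luroth_weight_ge_power[OF b] by (smt (verit) zero_less_power)
  have "(\<Union>c\<in>{c. real c \<ge> Rn t b}. cylinder (b @ [c]))
      = (\<lambda>y. cylinder_left b + y / luroth_weight b) ` (\<Union>c\<in>{c\<^sub>0..}. cylinder [c])"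
    by (simp add: Collect_real_ge_eq_atLeast cylinder_append[OF b] image_UN c\<^sub>0_def)
  also have "\<dots> = {cylinder_left b<..cylinder_left b + 1 / (real c\<^sub>0 - 1) / luroth_weight b}"
    using c\<^sub>0(1) W
    by (simp add: cylinder_singleton UN_digit_intervals_atLeast affine_image_greaterThanAtMost)
  moreover have "0 < 1 / (real c\<^sub>0 - 1) / luroth_weight b"
    using c\<^sub>0(1) W by simp
  ultimately show ?thesis
    using c\<^sub>0(2) by (simp add: Kn_def mult.commute)
qed

lemma Qn_append_singleton: "Qn (b @ [c]) = real c * luroth_weight b"
  by (simp add: Qn_def luroth_weight_def nth_append prod.list_conv_set_nth atLeast0LessThan)

lemma powr_neg_le_telescope:
  fixes c \<sigma> :: real
  assumes "\<sigma> > 1" and "c > 1"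
  shows "c powr -\<sigma> \<le> ((c - 1) powr (1 - \<sigma>) - c powr (1 - \<sigma>)) / (\<sigma> - 1)"
proof -
  have deriv: "((\<lambda>x. x powr (1 - \<sigma>)) has_real_derivative (1 - \<sigma>) * x powr (1 - \<sigma> - 1)) (at x)"
    if "c - 1 \<le> x" for x
    using that assms by (intro has_real_derivative_powr) auto
  obtain z where z: "c - 1 < z" "z < c"
    and mvt: "c powr (1 - \<sigma>) - (c - 1) powr (1 - \<sigma>) = (c - (c - 1)) * ((1 - \<sigma>) * z powr (1 - \<sigma> - 1))"
    using MVT2[of "c - 1" c, OF _ deriv] by auto
  have "(\<sigma> - 1) * c powr -\<sigma> \<le> (\<sigma> - 1) * z powr -\<sigma>"
    using z assms by (intro mult_left_mono powr_mono2') auto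
  also have "\<dots> = (c - 1) powr (1 - \<sigma>) - c powr (1 - \<sigma>)"
    using mvt by (simp add: algebra_simps)
  finally show ?thesis
    using assms by (simp add: pos_le_divide_eq mult.commute)
qed

lemma sum_powr_neg_atLeastLessThan_le:
  fixes \<sigma> :: real
  assumes "\<sigma> > 1" and "c\<^sub>0 \<ge> 2"
  shows "(\<Sum>c\<in>{c\<^sub>0..<c\<^sub>0 + k}. real c powr -\<sigma>)
    \<le> ((real c\<^sub>0 - 1) powr (1 - \<sigma>) - (real (c\<^sub>0 + k) - 1) powr (1 - \<sigma>)) / (\<sigma> - 1)"
proof (induction k)
  case (Suc k)
  have "(\<Sum>c\<in>{c\<^sub>0..<c\<^sub>0 + Suc k}. real c powr -\<sigma>)
      = (\<Sum>c\<in>{c\<^sub>0..<c\<^sub>0 + k}. real c powr -\<sigma>) + real (c\<^sub>0 + k) powr -\<sigma>"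
    by simp
  also have "\<dots> \<le> ((real c\<^sub>0 - 1) powr (1 - \<sigma>) - (real (c\<^sub>0 + k) - 1) powr (1 - \<sigma>)) / (\<sigma> - 1)
      + ((real (c\<^sub>0 + k) - 1) powr (1 - \<sigma>) - real (c\<^sub>0 + k) powr (1 - \<sigma>)) / (\<sigma> - 1)"
    using Suc.IH powr_neg_le_telescope[OF assms(1), of "real (c\<^sub>0 + k)"] assms(2)
    by (intro add_mono) auto
  also have "\<dots> = ((real c\<^sub>0 - 1) powr (1 - \<sigma>) - (real (c\<^sub>0 + Suc k) - 1) powr (1 - \<sigma>)) / (\<sigma> - 1)"
    by (simp add: diff_divide_distrib)
  finally show ?case .
qed simp

lemma sum_powr_neg_le:
  fixes \<sigma> :: real
  assumes "\<sigma> > 1" and "c\<^sub>0 \<ge> 2" and "finite F" and "F \<subseteq> {c\<^sub>0..}"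
  shows "(\<Sum>c\<in>F. real c powr -\<sigma>) \<le> (real c\<^sub>0 - 1) powr (1 - \<sigma>) / (\<sigma> - 1)"
proof -
  define k where "k = Suc (Max F)"
  have "F \<subseteq> {c\<^sub>0..<c\<^sub>0 + k}"
    using Max_ge[OF assms(3)] assms(4) by (fastforce simp: k_def)
  then have "(\<Sum>c\<in>F. real c powr -\<sigma>) \<le> (\<Sum>c\<in>{c\<^sub>0..<c\<^sub>0 + k}. real c powr -\<sigma>)"
    by (intro sum_mono2) auto
  also have "\<dots> \<le> ((real c\<^sub>0 - 1) powr (1 - \<sigma>) - (real (c\<^sub>0 + k) - 1) powr (1 - \<sigma>)) / (\<sigma> - 1)"
    by (rule sum_powr_neg_atLeastLessThan_le[OF assms(1,2)])
  also have "\<dots> \<le> (real c\<^sub>0 - 1) powr (1 - \<sigma>) / (\<sigma> - 1)"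
    using assms(1) by (intro divide_right_mono) auto
  finally show ?thesis .
qed

lemma Rn_append_singleton: "Rn t (b @ [c]) = (real c * luroth_weight b) powr (1 / t)"
  by (simp add: Rn_def Qn_append_singleton)

lemma Qn_bounds:
  assumes "\<forall>d\<in>set b. d \<ge> 2" and "b \<noteq> []"
  shows "2 \<le> Qn b" and "Qn b \<le> luroth_weight b"
proof -
  obtain b' d where b: "b = b' @ [d]" using assms(2) by (cases b rule: rev_exhaust) auto
  have d: "real d \<ge> 2" using assms(1) by (simp add: b)
  have "(1::real) \<le> 2 ^ length b'" by simp
  also have "\<dots> \<le> luroth_weight b'" using assms(1) by (intro luroth_weight_ge_power) (simp add: b)
  finally have W: "luroth_weight b' \<ge> 1" .
  show "2 \<le> Qn b"
    using mult_mono[OF d W] by (simp add: b Qn_append_singleton)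
  have "real d * luroth_weight b' * 1 \<le> real d * luroth_weight b' * (real d - 1)"
    using d W by (intro mult_left_mono) auto
  then show "Qn b \<le> luroth_weight b"
    by (simp add: b Qn_append_singleton luroth_weight_append_singleton algebra_simps)
qed

lemma diameter_Kn_append_le:
  assumes b: "\<forall>d\<in>set b. d \<ge> 2" and c: "c \<ge> 2" and R: "Rn t (b @ [c]) \<ge> 2"
  shows "0 < diameter (Kn t (b @ [c]))"
    and "diameter (Kn t (b @ [c])) \<le> 4 / (luroth_weight b * real c ^ 2 * Rn t (b @ [c]))"
proof -
  define R where "R = Rn t (b @ [c])"
  have W: "luroth_weight b > 0"
    using luroth_weight_ge_power[OF b] by (smt (verit) zero_less_power)
  have bc: "\<forall>d\<in>set (b @ [c]). d \<ge> 2" using b c by auto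
  have D: "diameter (Kn t (b @ [c]))
      = 1 / (luroth_weight b * (real c * (real c - 1)) * (\<lceil>R\<rceil> - 1))"
    using diameter_Kn[OF bc] R by (simp add: R_def luroth_weight_append_singleton)
  have ceil: "R / 2 \<le> \<lceil>R\<rceil> - 1"
    using R le_of_int_ceiling[of R] unfolding R_def by linarith
  then show "0 < diameter (Kn t (b @ [c]))"
    using D W c R by (simp add: R_def)
  from ceil have "1 / (luroth_weight b * (real c * (real c - 1)) * (\<lceil>R\<rceil> - 1))
      \<le> 1 / (luroth_weight b * (real c ^ 2 / 2) * (R / 2))"
    using W c R
    by (intro divide_left_mono mult_mono mult_pos_pos) (auto simp: R_def power2_eq_square)
  with D show "diameter (Kn t (b @ [c])) \<le> 4 / (luroth_weight b * real c ^ 2 * Rn t (b @ [c]))"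
    by (simp add: R_def)
qed

lemma powr_child_bound_eq:
  fixes P c s t :: real
  assumes "P > 0" and "c > 0"
  shows "(4 / (P * c ^ 2 * (c * P) powr (1 / t))) powr s
    = 4 powr s * P powr -(s + s / t) * c powr -(s * (2 + 1 / t))"
proof -
  have "c ^ 2 = c powr 2" using assms by (simp add: powr_numeral)
  then have "(c ^ 2) powr s = c powr (2 * s)" by (simp add: powr_powr)
  moreover have "((c * P) powr (1 / t)) powr s = c powr (s / t) * P powr (s / t)"
    using assms by (simp add: powr_powr powr_mult)
  ultimately have "(4 / (P * c ^ 2 * (c * P) powr (1 / t))) powr s
      = 4 powr s / (P powr s * c powr (2 * s) * (c powr (s / t) * P powr (s / t)))"
    using assms by (simp add: powr_divide powr_mult del: powr_numeral)
  also have "P powr s * c powr (2 * s) * (c powr (s / t) * P powr (s / t))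
      = P powr (s + s / t) * c powr (s * (2 + 1 / t))"
    by (simp add: powr_add algebra_simps)
  also have "4 powr s / \<dots> = 4 powr s * P powr -(s + s / t) * c powr -(s * (2 + 1 / t))"
    unfolding powr_minus[of P] powr_minus[of c] by (simp add: divide_inverse)
  finally show ?thesis .
qed

lemma diameter_Kn_append_powr_le:
  assumes t: "t > 0" and s: "s > 0" and b: "\<forall>d\<in>set b. d \<ge> 2" and c: "c \<ge> 2"
    and W: "2 powr t \<le> luroth_weight b"
  shows "diameter (Kn t (b @ [c])) powr s
    \<le> 4 powr s * luroth_weight b powr -(s + s / t) * real c powr -(s * (2 + 1 / t))"
proof -
  define P where "P = luroth_weight b"
  have P: "P > 0" using W by (simp add: P_def) (smt (verit) powr_gt_zero)
  have "2 = (2 powr t) powr (1 / t)" using t by (simp add: powr_powr)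
  also have "\<dots> \<le> P powr (1 / t)" using W t by (intro powr_mono2) (auto simp: P_def)
  also have "\<dots> \<le> (real c * P) powr (1 / t)" using P c t by (intro powr_mono2) auto
  finally have R: "Rn t (b @ [c]) \<ge> 2" by (simp add: Rn_append_singleton P_def)
  have "diameter (Kn t (b @ [c])) powr s \<le> (4 / (P * real c ^ 2 * (real c * P) powr (1 / t))) powr s"
    using diameter_Kn_append_le[OF b c R] s
    by (intro powr_mono2) (auto simp: Rn_append_singleton P_def)
  also have "\<dots> = 4 powr s * P powr -(s + s / t) * real c powr -(s * (2 + 1 / t))"
    using P c by (intro powr_child_bound_eq) auto
  finally show ?thesis by (simp add: P_def)
qed

lemma tail_estimate_le_powr:
  fixes t s \<sigma> P x :: real
  assumes t: "t > 0" and s: "s > 0" and \<sigma>: "\<sigma> = s * (2 + 1 / t)" "\<sigma> > 1"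
    and P: "P \<ge> 1" and M: "4 powr s / (\<sigma> - 1) \<le> P powr (min s (\<sigma> - 1) / t)"
    and x: "1 \<le> x" "x \<le> P powr (1 / t)"
  shows "4 powr s * P powr -(s + s / t) * x powr (1 - \<sigma>) / (\<sigma> - 1) \<le> (1 / (P * x)) powr s"
proof -
  define M where "M = 4 powr s / (\<sigma> - 1)"
  define \<gamma> where "\<gamma> = \<sigma> - 1 - s"
  have Ppos: "P > 0" and xpos: "x > 0" using P x by auto
  have main: "M * P powr -(s / t) \<le> x powr \<gamma>"
  proof (cases "\<gamma> \<ge> 0")
    case True
    have "M \<le> P powr (s / t)"
      using M powr_mono[of "min s (\<sigma> - 1) / t" "s / t" P] P t
      by (simp add: M_def divide_right_mono)
    then have "M * P powr -(s / t) \<le> P powr (s / t) * P powr -(s / t)"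
      by (intro mult_right_mono) auto
    also have "\<dots> = 1" using Ppos by (simp flip: powr_add)
    also have "\<dots> \<le> x powr \<gamma>" using True x by (intro ge_one_powr_ge_zero) auto
    finally show ?thesis .
  next
    case False
    have "M \<le> P powr ((\<sigma> - 1) / t)"
      using M powr_mono[of "min s (\<sigma> - 1) / t" "(\<sigma> - 1) / t" P] P t
      by (simp add: M_def divide_right_mono)
    then have "M * P powr -(s / t) \<le> P powr ((\<sigma> - 1) / t) * P powr -(s / t)"
      by (intro mult_right_mono) auto
    also have "\<dots> = (P powr (1 / t)) powr \<gamma>"
      using Ppos by (simp add: \<gamma>_def powr_powr diff_divide_distrib flip: powr_add)
    also have "\<dots> \<le> x powr \<gamma>" using False x by (intro powr_mono2') auto
    finally show ?thesis .
  qed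
  have "4 powr s * P powr -(s + s / t) * x powr (1 - \<sigma>) / (\<sigma> - 1)
      = (M * P powr -(s / t)) * (P powr -s * x powr -s * x powr -\<gamma>)"
    unfolding M_def \<gamma>_def using Ppos xpos by (simp add: algebra_simps flip: powr_add)
  also have "\<dots> \<le> x powr \<gamma> * (P powr -s * x powr -s * x powr -\<gamma>)"
    using main by (intro mult_right_mono) auto
  also have "\<dots> = (1 / (P * x)) powr s"
    using Ppos xpos by (simp add: powr_minus powr_mult powr_divide field_simps flip: powr_add)
  finally show ?thesis .
qed

lemma sum_diameter_Kn_append_le:
  fixes t s \<sigma> :: real
  assumes t: "t > 0" and s: "s > 0" and \<sigma>: "\<sigma> = s * (2 + 1 / t)" "\<sigma> > 1"
    and b: "\<forall>d\<in>set b. d \<ge> 2"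
    and W1: "2 powr t \<le> luroth_weight b"
    and W2: "4 powr s / (\<sigma> - 1) \<le> luroth_weight b powr (min s (\<sigma> - 1) / t)"
  shows "(\<lambda>c. diameter (Kn t (b @ [c])) powr s) summable_on {c. real c \<ge> Rn t b}
    \<and> (\<Sum>\<^sub>\<infinity>c\<in>{c. real c \<ge> Rn t b}. diameter (Kn t (b @ [c])) powr s) \<le> diameter (Kn t b) powr s"
proof -
  define P where "P = luroth_weight b"
  define R where "R = Rn t b"
  define c\<^sub>0 where "c\<^sub>0 = nat \<lceil>R\<rceil>"
  define f where "f = (\<lambda>c. diameter (Kn t (b @ [c])) powr s)"
  have "1 < (2::real) powr t" using t by simp
  then have P: "P > 1" using W1 by (simp add: P_def)
  then have "b \<noteq> []" by (auto simp: P_def)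
  note Q = Qn_bounds[OF b this]
  have R1: "R > 1" using Q(1) t by (simp add: R_def Rn_def)
  have RP: "R \<le> P powr (1 / t)" using Q t by (simp add: R_def Rn_def P_def powr_mono2)
  have c\<^sub>0: "c\<^sub>0 \<ge> 2" "real c\<^sub>0 = \<lceil>R\<rceil>" "real c\<^sub>0 - 1 \<le> R"
    using R1 ceiling_correct[of R] by (auto simp: c\<^sub>0_def le_nat_iff le_ceiling_iff)
  have index: "{c. real c \<ge> R} = {c\<^sub>0..}" by (simp add: c\<^sub>0_def Collect_real_ge_eq_atLeast)
  have diam: "diameter (Kn t b) = 1 / (P * (real c\<^sub>0 - 1))"
    using diameter_Kn[OF b] R1 c\<^sub>0(2) by (simp add: R_def P_def)
  have finite_sums: "sum f F \<le> diameter (Kn t b) powr s"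
    if "finite F" "F \<subseteq> {c. real c \<ge> R}" for F
  proof -
    have F: "F \<subseteq> {c\<^sub>0..}" using that index by simp
    have "sum f F \<le> (\<Sum>c\<in>F. 4 powr s * P powr -(s + s / t) * real c powr -\<sigma>)"
      using F c\<^sub>0(1) W1 diameter_Kn_append_powr_le[OF t s b] by (intro sum_mono) (auto simp: f_def \<sigma> P_def)
    also have "\<dots> = 4 powr s * P powr -(s + s / t) * (\<Sum>c\<in>F. real c powr -\<sigma>)"
      by (simp add: sum_distrib_left)
    also have "\<dots> \<le> 4 powr s * P powr -(s + s / t) * ((real c\<^sub>0 - 1) powr (1 - \<sigma>) / (\<sigma> - 1))"
      using sum_powr_neg_le[OF \<sigma>(2) c\<^sub>0(1) that(1) F] by (intro mult_left_mono) auto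
    also have "\<dots> \<le> (1 / (P * (real c\<^sub>0 - 1))) powr s"
      using tail_estimate_le_powr[OF t s \<sigma> _ _ _ order_trans[OF c\<^sub>0(3) RP]] P W2 c\<^sub>0(1)
      by (simp add: P_def)
    finally show ?thesis by (simp add: diam)
  qed
  have summable: "f summable_on {c. real c \<ge> R}"
    using finite_sums by (intro nonneg_bdd_above_summable_on bdd_aboveI) (auto simp: f_def)
  moreover have "infsum f {c. real c \<ge> R} \<le> diameter (Kn t b) powr s"
    using infsum_le_finite_sums[OF summable finite_sums] .
  ultimately show ?thesis by (simp add: f_def R_def)
qed

lemma large_weight_sum_diameter_Kn_append_le:
  fixes t s :: real
  assumes t: "t > 0" and s: "s > 0" and \<sigma>: "s * (2 + 1 / t) > 1"
  shows "\<exists>W. \<forall>b. (\<forall>d\<in>set b. d \<ge> 2) \<and> luroth_weight b \<ge> W \<longrightarrow>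
    (\<lambda>c. diameter (Kn t (b @ [c])) powr s) summable_on {c. real c \<ge> Rn t b}
    \<and> (\<Sum>\<^sub>\<infinity>c\<in>{c. real c \<ge> Rn t b}. diameter (Kn t (b @ [c])) powr s) \<le> diameter (Kn t b) powr s"
proof -
  define \<sigma> where "\<sigma> = s * (2 + 1 / t)"
  define m where "m = min s (\<sigma> - 1) / t"
  define M where "M = 4 powr s / (\<sigma> - 1)"
  have m: "m > 0" and M: "M > 0" using s t \<sigma> by (simp_all add: m_def M_def \<sigma>_def)
  have "M \<le> luroth_weight b powr m" if "luroth_weight b \<ge> M powr (1 / m)" for b
  proof -
    have "M = (M powr (1 / m)) powr m" using m M by (simp add: powr_powr)
    also have "\<dots> \<le> luroth_weight b powr m" using that m by (intro powr_mono2) auto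
    finally show ?thesis .
  qed
  then show ?thesis
    using sum_diameter_Kn_append_le[OF t s \<sigma>_def] \<sigma>
    by (intro exI[of _ "max (2 powr t) (M powr (1 / m))"]) (simp add: \<sigma>_def m_def M_def)
qed

lemma critical_exponent_gt_one:
  fixes t \<delta> :: real
  assumes "t > 0" and "\<delta> > 0"
  shows "(t / (2 * t + 1) + \<delta>) * (2 + 1 / t) > 1"
proof -
  have "t * (2 + 1 / t) = 2 * t + 1" using assms(1) by (simp add: distrib_left)
  moreover have "2 * t + 1 > 0" using assms(1) by simp
  ultimately have "t / (2 * t + 1) * (2 + 1 / t) = 1"
    by (metis times_divide_eq_left divide_self less_irrefl)
  moreover have "\<delta> * (2 + 1 / t) > 0" using assms by (intro mult_pos_pos add_pos_pos) auto
  ultimately show ?thesis by (simp only: distrib_right)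
qed

theorem mainTheorem7:
  fixes \<alpha> \<epsilon> \<delta>\<^sub>1 :: real
  assumes "\<alpha> > 0" and "\<epsilon> > 0"
    and "0 < \<delta>\<^sub>1" and "\<delta>\<^sub>1 < 1 / (2 + 1 / (\<alpha> + \<epsilon>))"
  shows "\<exists>N::nat. \<forall>n \<ge> N. \<forall>b :: nat list. length b = n \<and> (\<forall>x \<in> set b. x \<ge> 2) \<longrightarrow>
    (let s = (\<alpha> + \<epsilon>) / (2 * (\<alpha> + \<epsilon>) + 1) + \<delta>\<^sub>1 in
      (\<lambda>c. diameter (Kn (\<alpha> + \<epsilon>) (b @ [c])) powr s) summable_on {c::nat. real c \<ge> Rn (\<alpha> + \<epsilon>) b}
      \<and> (\<Sum>\<^sub>\<infinity>c \<in> {c::nat. real c \<ge> Rn (\<alpha> + \<epsilon>) b}. diameter (Kn (\<alpha> + \<epsilon>) (b @ [c])) powr s)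
          \<le> diameter (Kn (\<alpha> + \<epsilon>) b) powr s)"
proof -
  define t where "t = \<alpha> + \<epsilon>"
  define s where "s = t / (2 * t + 1) + \<delta>\<^sub>1"
  have t: "t > 0" and s: "s > 0" using assms by (simp_all add: t_def s_def add_pos_pos)
  have "s * (2 + 1 / t) > 1"
    using critical_exponent_gt_one[OF t assms(3)] by (simp add: s_def)
  then obtain W where W: "\<forall>b. (\<forall>d\<in>set b. d \<ge> 2) \<and> luroth_weight b \<ge> W \<longrightarrow>
      (\<lambda>c. diameter (Kn t (b @ [c])) powr s) summable_on {c. real c \<ge> Rn t b}
      \<and> (\<Sum>\<^sub>\<infinity>c\<in>{c. real c \<ge> Rn t b}. diameter (Kn t (b @ [c])) powr s) \<le> diameter (Kn t b) powr s"
    using large_weight_sum_diameter_Kn_append_le[OF t s] by auto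
  obtain N where N: "W < 2 ^ N" using real_arch_pow[of 2 W] by auto
  have "W \<le> luroth_weight b" if "length b \<ge> N" and "\<forall>d\<in>set b. d \<ge> 2" for b
    using N power_increasing[OF that(1), of "2::real"] luroth_weight_ge_power[OF that(2)] by linarith
  with W show ?thesis by (auto simp: t_def s_def Let_def)
qed

end
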